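(* Let $\mathbf A$ be a balanced residuated semigroup satisfying (H1), (H2), (H3) (for all $x,y$: if $1_x=1_y$ then $1_{xy}=1_x$, $1_{x/y}=1_x$ and $1_{x\backslash y}=1_x$, where $1_x:=x/x$). For each positive idempotent $p$ of $\mathbf A$ let $A_p:=\{a\in A: a\backslash a=p\}$. Then $\{A_p: p \text{ a positive idempotent}\}$ is a partition of $A$; each $A_p$ is closed under $\cdot,\backslash,/$, so that $\mathbf A_p=\langle A_p,\le,\cdot,\backslash,/,p\rangle$ (restricted order and operations) is a residuated monoid with global identity $p$; and each $\mathbf A_p$ is integrally closed, i.e. $a\backslash a=p=a/a$ for all $a\in A_p$.
   Context: A residuated semigroup is a structure $\langle A,\le,\cdot,\backslash,/\rangle$ where $\langle A,\le\rangle$ is a poset, $\langle A,\cdot\rangle$ is a semigroup (we write $xy$ for $x\cdot y$), and for all $x,y,z$: $xy\le z\iff x\le z/y\iff y\le x\backslash z$. An element $p$ is positive if $a\le pa$ and $a\le ap$ for all $a$; idempotent if $pp=p$. A residuated semigroup is balanced if it satisfies $x\backslash x=x/x$ and every element of the form $a\backslash a$ or $a/a$ is positive. A residuated monoid is a residuated semigroup with a global identity $1$ ($1a=a=a1$ for all $a$); it is integrally closed if $x\backslash x=1$ for all $x$. *)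

theory Defs
  imports Main "HOL-Library.Disjoint_Sets"
begin

text \<open>Structures are given by a carrier set S, an order relation le, multiplication m,
  left division ldiv (x\<setminus>y, written ldiv x y) and right division rdiv (x/y, written rdiv x y).\<close>

definition residuated_semigroup ::
  "'a set \<Rightarrow> ('a \<Rightarrow> 'a \<Rightarrow> bool) \<Rightarrow> ('a \<Rightarrow> 'a \<Rightarrow> 'a) \<Rightarrow> ('a \<Rightarrow> 'a \<Rightarrow> 'a) \<Rightarrow> ('a \<Rightarrow> 'a \<Rightarrow> 'a) \<Rightarrow> bool"
  where "residuated_semigroup S le m ldiv rdiv \<longleftrightarrow>
    (\<forall>x\<in>S. le x x) \<and>
    (\<forall>x\<in>S. \<forall>y\<in>S. le x y \<and> le y x \<longrightarrow> x = y) \<and>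
    (\<forall>x\<in>S. \<forall>y\<in>S. \<forall>z\<in>S. le x y \<and> le y z \<longrightarrow> le x z) \<and>
    (\<forall>x\<in>S. \<forall>y\<in>S. m x y \<in> S \<and> ldiv x y \<in> S \<and> rdiv x y \<in> S) \<and>
    (\<forall>x\<in>S. \<forall>y\<in>S. \<forall>z\<in>S. m (m x y) z = m x (m y z)) \<and>
    (\<forall>x\<in>S. \<forall>y\<in>S. \<forall>z\<in>S. (le (m x y) z \<longleftrightarrow> le x (rdiv z y)) \<and> (le (m x y) z \<longleftrightarrow> le y (ldiv x z)))"

definition positive_el ::
  "'a set \<Rightarrow> ('a \<Rightarrow> 'a \<Rightarrow> bool) \<Rightarrow> ('a \<Rightarrow> 'a \<Rightarrow> 'a) \<Rightarrow> 'a \<Rightarrow> bool"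
  where "positive_el S le m p \<longleftrightarrow> p \<in> S \<and> (\<forall>a\<in>S. le a (m p a) \<and> le a (m a p))"

definition idempotent_el :: "('a \<Rightarrow> 'a \<Rightarrow> 'a) \<Rightarrow> 'a \<Rightarrow> bool"
  where "idempotent_el m p \<longleftrightarrow> m p p = p"

definition balanced ::
  "'a set \<Rightarrow> ('a \<Rightarrow> 'a \<Rightarrow> bool) \<Rightarrow> ('a \<Rightarrow> 'a \<Rightarrow> 'a) \<Rightarrow> ('a \<Rightarrow> 'a \<Rightarrow> 'a) \<Rightarrow> ('a \<Rightarrow> 'a \<Rightarrow> 'a) \<Rightarrow> bool"
  where "balanced S le m ldiv rdiv \<longleftrightarrow>
    (\<forall>x\<in>S. ldiv x x = rdiv x x) \<and>
    (\<forall>a\<in>S. positive_el S le m (ldiv a a) \<and> positive_el S le m (rdiv a a))"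

definition H123 ::
  "'a set \<Rightarrow> ('a \<Rightarrow> 'a \<Rightarrow> 'a) \<Rightarrow> ('a \<Rightarrow> 'a \<Rightarrow> 'a) \<Rightarrow> ('a \<Rightarrow> 'a \<Rightarrow> 'a) \<Rightarrow> bool"
  where "H123 S m ldiv rdiv \<longleftrightarrow>
    (\<forall>x\<in>S. \<forall>y\<in>S. rdiv x x = rdiv y y \<longrightarrow>
       rdiv (m x y) (m x y) = rdiv x x \<and>
       rdiv (rdiv x y) (rdiv x y) = rdiv x x \<and>
       rdiv (ldiv x y) (ldiv x y) = rdiv x x)"

definition residuated_monoid ::
  "'a set \<Rightarrow> ('a \<Rightarrow> 'a \<Rightarrow> bool) \<Rightarrow> ('a \<Rightarrow> 'a \<Rightarrow> 'a) \<Rightarrow> ('a \<Rightarrow> 'a \<Rightarrow> 'a) \<Rightarrow> ('a \<Rightarrow> 'a \<Rightarrow> 'a) \<Rightarrow> 'a \<Rightarrow> bool"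
  where "residuated_monoid S le m ldiv rdiv e \<longleftrightarrow>
    residuated_semigroup S le m ldiv rdiv \<and> e \<in> S \<and> (\<forall>a\<in>S. m e a = a \<and> m a e = a)"

definition integrally_closed ::
  "'a set \<Rightarrow> ('a \<Rightarrow> 'a \<Rightarrow> 'a) \<Rightarrow> 'a \<Rightarrow> bool"
  where "integrally_closed S ldiv e \<longleftrightarrow> (\<forall>x\<in>S. ldiv x x = e)"

definition block :: "'a set \<Rightarrow> ('a \<Rightarrow> 'a \<Rightarrow> 'a) \<Rightarrow> 'a \<Rightarrow> 'a set"
  where "block S ldiv p = {a \<in> S. ldiv a a = p}"

end

theory Submission
  imports Defs
begin

text \<open>In a residuated semigroup every positive local unit u = a\<setminus>a is
  idempotent, since a(uu) = (au)u \<le> au \<le> a gives uu \<le> a\<setminus>a = u; and a positive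
  idempotent p satisfies p\<setminus>p = p. Hence the blocks A_p are nonempty, disjoint and cover
  A. Balance turns equality of left units into equality of right units, so (H1)--(H3)
  yield that each block is closed under the operations, and inside A_p positivity
  squeezes ap and pa between a and a(a\<setminus>a), (a/a)a \<le> a.\<close>

lemma residuated_semigroupI:
  assumes "\<And>x. x \<in> S \<Longrightarrow> le x x"
    and "\<And>x y. x \<in> S \<Longrightarrow> y \<in> S \<Longrightarrow> le x y \<Longrightarrow> le y x \<Longrightarrow> x = y"
    and "\<And>x y z. x \<in> S \<Longrightarrow> y \<in> S \<Longrightarrow> z \<in> S \<Longrightarrow> le x y \<Longrightarrow> le y z \<Longrightarrow> le x z"
    and "\<And>x y. x \<in> S \<Longrightarrow> y \<in> S \<Longrightarrow> m x y \<in> S \<and> ldiv x y \<in> S \<and> rdiv x y \<in> S"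
    and "\<And>x y z. x \<in> S \<Longrightarrow> y \<in> S \<Longrightarrow> z \<in> S \<Longrightarrow> m (m x y) z = m x (m y z)"
    and "\<And>x y z. x \<in> S \<Longrightarrow> y \<in> S \<Longrightarrow> z \<in> S \<Longrightarrow> le (m x y) z \<longleftrightarrow> le x (rdiv z y)"
    and "\<And>x y z. x \<in> S \<Longrightarrow> y \<in> S \<Longrightarrow> z \<in> S \<Longrightarrow> le (m x y) z \<longleftrightarrow> le y (ldiv x z)"
  shows "residuated_semigroup S le m ldiv rdiv"
  unfolding residuated_semigroup_def using assms by meson

locale res_semigroup =
  fixes A :: "'a set" and le :: "'a \<Rightarrow> 'a \<Rightarrow> bool" and m ldiv rdiv :: "'a \<Rightarrow> 'a \<Rightarrow> 'a"
  assumes res_semigroup: "residuated_semigroup A le m ldiv rdiv"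
begin

lemma le_refl: "x \<in> A \<Longrightarrow> le x x"
  using res_semigroup by (simp add: residuated_semigroup_def)

lemma le_antisym: "x \<in> A \<Longrightarrow> y \<in> A \<Longrightarrow> le x y \<Longrightarrow> le y x \<Longrightarrow> x = y"
  using res_semigroup unfolding residuated_semigroup_def by metis

lemma le_trans: "x \<in> A \<Longrightarrow> y \<in> A \<Longrightarrow> z \<in> A \<Longrightarrow> le x y \<Longrightarrow> le y z \<Longrightarrow> le x z"
  using res_semigroup unfolding residuated_semigroup_def by metis

lemma mult_closed: "x \<in> A \<Longrightarrow> y \<in> A \<Longrightarrow> m x y \<in> A"
  and ldiv_closed: "x \<in> A \<Longrightarrow> y \<in> A \<Longrightarrow> ldiv x y \<in> A"
  and rdiv_closed: "x \<in> A \<Longrightarrow> y \<in> A \<Longrightarrow> rdiv x y \<in> A"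
  using res_semigroup by (simp_all add: residuated_semigroup_def)

lemma mult_assoc: "x \<in> A \<Longrightarrow> y \<in> A \<Longrightarrow> z \<in> A \<Longrightarrow> m (m x y) z = m x (m y z)"
  using res_semigroup by (simp add: residuated_semigroup_def)

lemma le_rdiv_iff: "x \<in> A \<Longrightarrow> y \<in> A \<Longrightarrow> z \<in> A \<Longrightarrow> le x (rdiv z y) \<longleftrightarrow> le (m x y) z"
  using res_semigroup unfolding residuated_semigroup_def by metis

lemma le_ldiv_iff: "x \<in> A \<Longrightarrow> y \<in> A \<Longrightarrow> z \<in> A \<Longrightarrow> le y (ldiv x z) \<longleftrightarrow> le (m x y) z"
  using res_semigroup unfolding residuated_semigroup_def by metis

lemma mult_right_mono:
  assumes "x \<in> A" "y \<in> A" "z \<in> A" "le x y"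
  shows "le (m x z) (m y z)"
proof -
  have yz: "m y z \<in> A" and q: "rdiv (m y z) z \<in> A"
    using assms mult_closed rdiv_closed by blast+
  have "le y (rdiv (m y z) z)"
    using le_rdiv_iff[OF assms(2,3) yz] le_refl[OF yz] by simp
  then have "le x (rdiv (m y z) z)"
    using le_trans[OF assms(1,2) q assms(4)] by simp
  then show ?thesis
    using le_rdiv_iff[OF assms(1,3) yz] by simp
qed

lemma mult_ldiv_self_le: "a \<in> A \<Longrightarrow> le (m a (ldiv a a)) a"
  using le_ldiv_iff[OF _ ldiv_closed] le_refl[OF ldiv_closed] by blast

lemma rdiv_self_mult_le: "a \<in> A \<Longrightarrow> le (m (rdiv a a) a) a"
  using le_rdiv_iff[OF rdiv_closed] le_refl[OF rdiv_closed] by blast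

lemma positive_ldiv_self_idempotent:
  assumes a: "a \<in> A" and pos: "positive_el A le m (ldiv a a)"
  shows "idempotent_el m (ldiv a a)"
proof -
  define u where "u = ldiv a a"
  have u: "u \<in> A" and au: "m a u \<in> A" and uu: "m u u \<in> A"
    using a ldiv_closed mult_closed unfolding u_def by blast+
  have au_le: "le (m a u) a"
    using mult_ldiv_self_le a unfolding u_def .
  have "le (m (m a u) u) (m a u)"
    using mult_right_mono[OF au a u au_le] .
  then have "le (m a (m u u)) a"
    using le_trans[OF mult_closed[OF au u] au a _ au_le] mult_assoc[OF a u u] by simp
  then have "le (m u u) u"
    using le_ldiv_iff[OF a uu a] unfolding u_def by simp
  moreover have "le u (m u u)"
    using pos u unfolding positive_el_def u_def by blast
  ultimately show ?thesis
    unfolding idempotent_el_def u_def[symmetric] using le_antisym u uu by blast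
qed

lemma positive_idempotent_ldiv_self:
  assumes pos: "positive_el A le m p" and idem: "idempotent_el m p"
  shows "ldiv p p = p"
proof -
  have p: "p \<in> A" and q: "ldiv p p \<in> A"
    using pos ldiv_closed unfolding positive_el_def by blast+
  have "le p (ldiv p p)"
    using le_ldiv_iff[OF p p p] le_refl[OF p] idem unfolding idempotent_el_def by simp
  moreover have "le (ldiv p p) (m p (ldiv p p))"
    using pos q unfolding positive_el_def by blast
  then have "le (ldiv p p) p"
    using le_trans[OF q mult_closed[OF p q] p] mult_ldiv_self_le[OF p] by blast
  ultimately show ?thesis
    using le_antisym p q by blast
qed

lemma residuated_semigroup_subset:
  assumes sub: "B \<subseteq> A"
    and closed: "\<And>x y. x \<in> B \<Longrightarrow> y \<in> B \<Longrightarrow> m x y \<in> B \<and> ldiv x y \<in> B \<and> rdiv x y \<in> B"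
  shows "residuated_semigroup B le m ldiv rdiv"
proof (rule residuated_semigroupI)
  fix x y z assume x: "x \<in> B" and y: "y \<in> B" and z: "z \<in> B"
  then have xA: "x \<in> A" and yA: "y \<in> A" and zA: "z \<in> A"
    using sub by blast+
  show "le x x" by (rule le_refl[OF xA])
  show "le x y \<Longrightarrow> le y x \<Longrightarrow> x = y" by (rule le_antisym[OF xA yA])
  show "le x y \<Longrightarrow> le y z \<Longrightarrow> le x z" by (rule le_trans[OF xA yA zA])
  show "m x y \<in> B \<and> ldiv x y \<in> B \<and> rdiv x y \<in> B" by (rule closed[OF x y])
  show "m (m x y) z = m x (m y z)" by (rule mult_assoc[OF xA yA zA])
  show "le (m x y) z \<longleftrightarrow> le x (rdiv z y)" by (rule le_rdiv_iff[OF xA yA zA, symmetric])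
  show "le (m x y) z \<longleftrightarrow> le y (ldiv x z)" by (rule le_ldiv_iff[OF xA yA zA, symmetric])
qed

end

locale balanced_res_semigroup = res_semigroup +
  assumes balanced: "balanced A le m ldiv rdiv"
begin

lemma ldiv_self_eq_rdiv_self: "a \<in> A \<Longrightarrow> ldiv a a = rdiv a a"
  using balanced unfolding balanced_def by blast

lemma positive_ldiv_self: "a \<in> A \<Longrightarrow> positive_el A le m (ldiv a a)"
  using balanced unfolding balanced_def by blast

lemma block_subset: "block A ldiv p \<subseteq> A"
  unfolding block_def by blast

lemma rdiv_self_block: "a \<in> block A ldiv p \<Longrightarrow> rdiv a a = p"
  unfolding block_def using ldiv_self_eq_rdiv_self by (metis (mono_tags) mem_Collect_eq)

lemma block_ldiv_self: "a \<in> A \<Longrightarrow> a \<in> block A ldiv (ldiv a a)"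
  unfolding block_def by simp

lemma partition_on_blocks:
  "partition_on A {block A ldiv p | p. positive_el A le m p \<and> idempotent_el m p}"
proof (rule partition_onI)
  show "\<Union>{block A ldiv p | p. positive_el A le m p \<and> idempotent_el m p} = A"
  proof
    show "A \<subseteq> \<Union>{block A ldiv p | p. positive_el A le m p \<and> idempotent_el m p}"
      using block_ldiv_self positive_ldiv_self positive_ldiv_self_idempotent by blast
  qed (use block_subset in blast)
next
  fix X Y
  assume "X \<in> {block A ldiv p | p. positive_el A le m p \<and> idempotent_el m p}"
    and "Y \<in> {block A ldiv p | p. positive_el A le m p \<and> idempotent_el m p}"
    and "X \<noteq> Y"
  then obtain p q where "X = block A ldiv p" "Y = block A ldiv q" "p \<noteq> q"
    by blast
  then show "disjnt X Y"
    unfolding disjnt_def block_def by blast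
next
  have "block A ldiv p \<noteq> {}" if "positive_el A le m p" "idempotent_el m p" for p
  proof -
    have "p \<in> A"
      using that(1) unfolding positive_el_def by blast
    then show ?thesis
      using block_ldiv_self positive_idempotent_ldiv_self[OF that] by force
  qed
  then show "{} \<notin> {block A ldiv p | p. positive_el A le m p \<and> idempotent_el m p}"
    by force
qed

lemma block_unit:
  assumes pos: "positive_el A le m p" and a: "a \<in> block A ldiv p"
  shows "m p a = a" and "m a p = a"
proof -
  have aA: "a \<in> A" and l: "ldiv a a = p"
    using a unfolding block_def by auto
  have r: "rdiv a a = p"
    using rdiv_self_block[OF a] .
  have "p \<in> A" and "le a (m p a)" and "le a (m a p)"
    using pos aA unfolding positive_el_def by blast+
  moreover have "le (m p a) a" and "le (m a p) a"
    using rdiv_self_mult_le[OF aA] mult_ldiv_self_le[OF aA] l r by simp_all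
  ultimately show "m p a = a" and "m a p = a"
    using le_antisym aA mult_closed by blast+
qed

lemma block_closed:
  assumes H: "H123 A m ldiv rdiv" and a: "a \<in> block A ldiv p" and b: "b \<in> block A ldiv p"
  shows "m a b \<in> block A ldiv p \<and> ldiv a b \<in> block A ldiv p \<and> rdiv a b \<in> block A ldiv p"
proof -
  have aA: "a \<in> A" and bA: "b \<in> A"
    using a b block_subset by blast+
  moreover have "rdiv a a = p" and "rdiv b b = p"
    using rdiv_self_block a b by blast+
  ultimately have "rdiv (m a b) (m a b) = p \<and> rdiv (rdiv a b) (rdiv a b) = p
      \<and> rdiv (ldiv a b) (ldiv a b) = p"
    using H unfolding H123_def by metis
  then show ?thesis
    using aA bA mult_closed ldiv_closed rdiv_closed ldiv_self_eq_rdiv_self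
    unfolding block_def by simp
qed

end

theorem proposition3p5:
  fixes A :: "'a set" and le :: "'a \<Rightarrow> 'a \<Rightarrow> bool"
    and m ldiv rdiv :: "'a \<Rightarrow> 'a \<Rightarrow> 'a"
  assumes "residuated_semigroup A le m ldiv rdiv"
    and "balanced A le m ldiv rdiv"
    and "H123 A m ldiv rdiv"
  shows "partition_on A {block A ldiv p | p. positive_el A le m p \<and> idempotent_el m p}
    \<and> (\<forall>p. positive_el A le m p \<and> idempotent_el m p \<longrightarrow>
          (\<forall>a\<in>block A ldiv p. \<forall>b\<in>block A ldiv p.
              m a b \<in> block A ldiv p \<and> ldiv a b \<in> block A ldiv p \<and> rdiv a b \<in> block A ldiv p)
        \<and> residuated_monoid (block A ldiv p) le m ldiv rdiv p
        \<and> integrally_closed (block A ldiv p) ldiv p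
        \<and> (\<forall>a\<in>block A ldiv p. rdiv a a = p))"
proof -
  interpret balanced_res_semigroup A le m ldiv rdiv
    using assms(1,2) by unfold_locales
  show ?thesis
  proof (intro conjI allI impI ballI)
    show "partition_on A {block A ldiv p | p. positive_el A le m p \<and> idempotent_el m p}"
      by (rule partition_on_blocks)
  next
    fix p assume p: "positive_el A le m p \<and> idempotent_el m p"
    have closed: "m a b \<in> block A ldiv p \<and> ldiv a b \<in> block A ldiv p \<and> rdiv a b \<in> block A ldiv p"
      if "a \<in> block A ldiv p" "b \<in> block A ldiv p" for a b
      using block_closed[OF assms(3) that] .
    then show "m a b \<in> block A ldiv p" "ldiv a b \<in> block A ldiv p" "rdiv a b \<in> block A ldiv p"
      if "a \<in> block A ldiv p" "b \<in> block A ldiv p" for a b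
      using that by blast+
    have "p \<in> block A ldiv p"
      using p positive_idempotent_ldiv_self unfolding block_def positive_el_def by blast
    then show "residuated_monoid (block A ldiv p) le m ldiv rdiv p"
      unfolding residuated_monoid_def
      using residuated_semigroup_subset[OF block_subset closed] block_unit p by blast
    show "integrally_closed (block A ldiv p) ldiv p"
      unfolding integrally_closed_def block_def by simp
    show "rdiv a a = p" if "a \<in> block A ldiv p" for a
      using rdiv_self_block[OF that] .
  qed
qed

end
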